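(* Let $m,n\geq 1$ be integers. Then \[ \sum_{k=1}^{n}{n\brack k}\frac{(q^m/z;q)_k(z;q)_{n-k}}{(zq^{-m};q)_{m+n}(1-q^k)^{m}}z^k =-\sum_{1\leq k_m\leq k_{m-1}\leq\cdots\leq k_1\leq n}\ \prod_{i=1}^{m}\frac{q^{k_i}}{(1-zq^{k_i-i})(1-q^{k_i})}. \]
   Context: For $N\geq 0$, $(x;q)_N=(1-x)(1-xq)\cdots(1-xq^{N-1})$ (with $(x;q)_0=1$). The $q$-binomial coefficient is ${n\brack k}=\frac{(q;q)_n}{(q;q)_k(q;q)_{n-k}}$ for $0\leq k\leq n$ and $0$ otherwise. The identity is one of rational functions in $q$ and $z$. *)

theory Defs
  imports Complex_Main "HOL-Library.FuncSet"
begin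

definition qpoch :: "complex \<Rightarrow> complex \<Rightarrow> nat \<Rightarrow> complex" where
  "qpoch x q N = (\<Prod>j<N. (1 - x * q ^ j))"

definition qbinom :: "complex \<Rightarrow> nat \<Rightarrow> nat \<Rightarrow> complex" where
  "qbinom q n k = (if k \<le> n then qpoch q q n / (qpoch q q k * qpoch q q (n - k)) else 0)"

end

theory Submission
  imports Defs
begin

text \<open>Write \<open>L(m, z, n)\<close> for the left-hand side and \<open>R(m, z, n)\<close> for the nested sum on the
  right without its sign. Summing first over \<open>k_1\<close> gives
  \<open>R(m+1, z, n) = \<Sum>k=1..n. w(z, k) R(m, z/q, k)\<close> with \<open>w(z, k) = q^k / ((1 - z q^(k-1)) (1 - q^k))\<close>,
  because \<open>z q^(k-i-1) = (z/q) q^(k-i)\<close>. The two q-Pascal rules show, term by term, that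
  \<open>L(m+1, z, n+1) - L(m+1, z, n) = w(z, n+1) L(m, z/q, n+1)\<close>, so \<open>L\<close> and \<open>-R\<close> obey the same
  recursion. They also agree for \<open>m = 0\<close>: by the q-Chu--Vandermonde identity
  \<open>\<Sum>k\<le>n. [n,k] (1/z;q)_k (z;q)_(n-k) z^k = (1;q)_n = 0\<close> for \<open>n \<ge> 1\<close>, whence \<open>L(0, z, n) = -1\<close>.\<close>

lemma qpoch_0 [simp]: "qpoch x q 0 = 1"
  by (simp add: qpoch_def)

lemma qpoch_Suc: "qpoch x q (Suc n) = qpoch x q n * (1 - x * q ^ n)"
  by (simp add: qpoch_def)

lemma qpoch_Suc_left: "qpoch x q (Suc n) = (1 - x) * qpoch (x * q) q n"
  unfolding qpoch_def by (subst prod.lessThan_Suc_shift) (simp add: mult.assoc)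

lemma qpoch_add: "qpoch x q (a + b) = qpoch x q a * qpoch (x * q ^ a) q b"
  by (induction b) (simp_all add: qpoch_Suc power_add mult_ac)

lemma qpoch_nonzero_prefix: "qpoch x q n \<noteq> 0 \<Longrightarrow> k \<le> n \<Longrightarrow> qpoch x q k \<noteq> 0"
  using qpoch_add[of x q k "n - k"] by auto

lemma qpoch_1_Suc: "qpoch 1 q (Suc n) = 0"
  by (simp add: qpoch_Suc_left)

lemma qpoch_q_nonzero:
  assumes "\<forall>i\<in>{1..n}. 1 - q ^ i \<noteq> 0" and "k \<le> n"
  shows "qpoch q q k \<noteq> 0"
  using assms unfolding qpoch_def by (auto simp flip: power_Suc)

lemma qbinom_diag: "qpoch q q n \<noteq> 0 \<Longrightarrow> qbinom q n n = 1"
  by (simp add: qbinom_def)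

lemma qbinom_0_right: "qpoch q q n \<noteq> 0 \<Longrightarrow> qbinom q n 0 = 1"
  by (simp add: qbinom_def)

lemma qbinom_eq_0: "n < k \<Longrightarrow> qbinom q n k = 0"
  by (simp add: qbinom_def)

lemma qbinom_Suc_right_ratio:
  assumes "\<forall>i\<in>{1..n}. 1 - q ^ i \<noteq> 0"
  shows "qbinom q n (Suc k) * (1 - q ^ Suc k) = qbinom q n k * (1 - q ^ (n - k))"
proof (cases "k < n")
  case True
  then obtain r where r: "n - k = Suc r" "n - Suc k = r"
    by (metis Suc_diff_Suc)
  have "qpoch q q k \<noteq> 0" "qpoch q q r \<noteq> 0"
    using True r by (auto intro!: qpoch_q_nonzero[OF assms])
  moreover have "1 - q ^ Suc k \<noteq> 0" "1 - q ^ Suc r \<noteq> 0"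
    using assms True r by (auto simp del: power_Suc)
  ultimately show ?thesis
    using True by (simp add: qbinom_def r qpoch_Suc field_simps)
next
  case False
  then show ?thesis
    by (cases "k = n") (simp_all add: qbinom_eq_0)
qed

lemma qbinom_Suc_Suc_ratio:
  assumes "\<forall>i\<in>{1..Suc n}. 1 - q ^ i \<noteq> 0"
  shows "qbinom q (Suc n) (Suc k) * (1 - q ^ Suc k) = qbinom q n k * (1 - q ^ Suc n)"
proof (cases "k \<le> n")
  case True
  have "qpoch q q k \<noteq> 0" "qpoch q q (n - k) \<noteq> 0"
    using True by (auto intro!: qpoch_q_nonzero[OF assms])
  moreover have "1 - q ^ Suc k \<noteq> 0"
    using assms True by (auto simp del: power_Suc)
  ultimately show ?thesis
    using True by (simp add: qbinom_def qpoch_Suc field_simps)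
qed (simp add: qbinom_eq_0)

lemma qbinom_pascal:
  assumes "\<forall>i\<in>{1..Suc n}. 1 - q ^ i \<noteq> 0" and "k \<le> n"
  shows "qbinom q (Suc n) (Suc k) = qbinom q n (Suc k) + q ^ (n - k) * qbinom q n k"
    and "qbinom q (Suc n) (Suc k) = q ^ Suc k * qbinom q n (Suc k) + qbinom q n k"
proof -
  have u: "1 - q ^ Suc k \<noteq> 0"
    using assms by (auto simp del: power_Suc)
  have pw: "q ^ k * q ^ (n - k) = q ^ n"
    using assms(2) by (simp flip: power_add)
  have r1: "qbinom q (Suc n) (Suc k) * (1 - q ^ Suc k) = qbinom q n k * (1 - q ^ Suc n)"
    by (rule qbinom_Suc_Suc_ratio[OF assms(1)])
  have r2: "qbinom q n (Suc k) * (1 - q ^ Suc k) = qbinom q n k * (1 - q ^ (n - k))"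
    using assms(1) by (intro qbinom_Suc_right_ratio) auto
  show "qbinom q (Suc n) (Suc k) = qbinom q n (Suc k) + q ^ (n - k) * qbinom q n k"
  proof (rule mult_right_cancel[OF u, THEN iffD1])
    show "qbinom q (Suc n) (Suc k) * (1 - q ^ Suc k)
        = (qbinom q n (Suc k) + q ^ (n - k) * qbinom q n k) * (1 - q ^ Suc k)"
      unfolding distrib_right r1 r2 by (simp add: algebra_simps pw)
  qed
  show "qbinom q (Suc n) (Suc k) = q ^ Suc k * qbinom q n (Suc k) + qbinom q n k"
  proof (rule mult_right_cancel[OF u, THEN iffD1])
    show "qbinom q (Suc n) (Suc k) * (1 - q ^ Suc k)
        = (q ^ Suc k * qbinom q n (Suc k) + qbinom q n k) * (1 - q ^ Suc k)"
      unfolding distrib_right mult.assoc r1 r2 by (simp add: algebra_simps pw)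
  qed
qed

lemma qbinom_qpoch_pascal:
  assumes "\<forall>i\<in>{1..Suc n}. 1 - q ^ i \<noteq> 0" and "q \<noteq> 0" and "k \<le> n"
  shows "qbinom q (Suc n) (Suc k) * qpoch z q (n - k)
           - qbinom q n (Suc k) * qpoch z q (n - Suc k) * (1 - z * q ^ n)
         = q ^ (n - k) * qbinom q n k * qpoch (z / q) q (n - k)"
proof (cases "k = n")
  case True
  have "qpoch q q n \<noteq> 0" "qpoch q q (Suc n) \<noteq> 0"
    using qpoch_q_nonzero[OF assms(1)] by auto
  then show ?thesis
    using True by (simp add: qbinom_diag qbinom_eq_0)
next
  case False
  then obtain r where r: "n - k = Suc r" "n - Suc k = r"
    using assms(3) by (metis Suc_diff_Suc le_neq_implies_less)
  define B1 B0 C where "B1 = qbinom q (Suc n) (Suc k)" and "B0 = qbinom q n (Suc k)"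
    and "C = qbinom q n k"
  have pascal1: "B1 - B0 = q ^ Suc r * C"
    using qbinom_pascal(1)[OF assms(1,3)] r unfolding B1_def B0_def C_def by simp
  have pascal2: "B1 - q ^ Suc k * B0 = C"
    using qbinom_pascal(2)[OF assms(1,3)] unfolding B1_def B0_def C_def by simp
  have "n = r + Suc k"
    using r(1) assms(3) by linarith
  then have qn: "q ^ n = q ^ r * q ^ Suc k"
    by (simp only: power_add)
  have "B1 * qpoch z q (Suc r) - B0 * qpoch z q r * (1 - z * q ^ n)
      = qpoch z q r * ((B1 - B0) - z * q ^ r * (B1 - q ^ Suc k * B0))"
    by (simp add: qpoch_Suc qn algebra_simps)
  also have "\<dots> = q ^ Suc r * C * ((1 - z / q) * qpoch z q r)"
    using assms(2) by (simp only: pascal1 pascal2) (simp add: field_simps)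
  also have "(1 - z / q) * qpoch z q r = qpoch (z / q) q (Suc r)"
    using assms(2) by (simp add: qpoch_Suc_left)
  finally show ?thesis
    unfolding r B1_def B0_def C_def by simp
qed

lemma qbinom_qpoch_term_Suc:
  assumes "\<forall>i\<in>{1..Suc n}. 1 - q ^ i \<noteq> 0" and "q \<noteq> 0" and "k \<le> n"
  shows "qbinom q (Suc n) (Suc k) * qpoch a q (Suc k) * qpoch b q (n - k) * b ^ Suc k
    = (1 - b * q ^ n) * (qbinom q n (Suc k) * qpoch a q (Suc k) * qpoch b q (n - Suc k) * b ^ Suc k)
      + (1 - a) * (b * q ^ n) * (qbinom q n k * qpoch (a * q) q k * qpoch (b / q) q (n - k) * (b / q) ^ k)"
proof -
  have pw: "q ^ (n - k) * b ^ Suc k = b * q ^ n * (b / q) ^ k"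
    using assms(2,3) by (simp add: power_divide field_simps flip: power_add)
  have "qbinom q (Suc n) (Suc k) * qpoch a q (Suc k) * qpoch b q (n - k) * b ^ Suc k
      = qpoch a q (Suc k) * b ^ Suc k * (qbinom q (Suc n) (Suc k) * qpoch b q (n - k))"
    by (simp add: algebra_simps)
  also have "\<dots> = qpoch a q (Suc k) * b ^ Suc k
      * (qbinom q n (Suc k) * qpoch b q (n - Suc k) * (1 - b * q ^ n)
         + q ^ (n - k) * qbinom q n k * qpoch (b / q) q (n - k))"
    using qbinom_qpoch_pascal[OF assms, of b] by (simp only: diff_eq_eq add.commute)
  also have "\<dots> = (1 - b * q ^ n) * (qbinom q n (Suc k) * qpoch a q (Suc k) * qpoch b q (n - Suc k) * b ^ Suc k)
      + (1 - a) * qpoch (a * q) q k * qbinom q n k * qpoch (b / q) q (n - k) * (q ^ (n - k) * b ^ Suc k)"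
    by (simp add: qpoch_Suc_left algebra_simps)
  also have "\<dots> = (1 - b * q ^ n) * (qbinom q n (Suc k) * qpoch a q (Suc k) * qpoch b q (n - Suc k) * b ^ Suc k)
      + (1 - a) * (b * q ^ n) * (qbinom q n k * qpoch (a * q) q k * qpoch (b / q) q (n - k) * (b / q) ^ k)"
    unfolding pw by (simp add: algebra_simps)
  finally show ?thesis .
qed

lemma qpoch_mult_eq_qbinom_sum:
  assumes "\<forall>i\<in>{1..n}. 1 - q ^ i \<noteq> 0" and "q \<noteq> 0"
  shows "qpoch (a * b) q n = (\<Sum>k\<le>n. qbinom q n k * qpoch a q k * qpoch b q (n - k) * b ^ k)"
  using assms(1)
proof (induction n arbitrary: a b)
  case 0
  then show ?case
    by (simp add: qbinom_def)
next
  case (Suc n)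
  define t where "t N a b k = qbinom q N k * qpoch a q k * qpoch b q (N - k) * b ^ k" for N a b k
  have hyp: "\<forall>i\<in>{1..n}. 1 - q ^ i \<noteq> 0"
    using Suc.prems by auto
  have head: "t (Suc n) a b 0 = (1 - b * q ^ n) * t n a b 0"
    using qpoch_q_nonzero[OF Suc.prems, of n] qpoch_q_nonzero[OF Suc.prems, of "Suc n"]
    by (simp add: t_def qbinom_0_right qpoch_Suc)
  have tail: "t (Suc n) a b (Suc k)
      = (1 - b * q ^ n) * t n a b (Suc k) + (1 - a) * (b * q ^ n) * t n (a * q) (b / q) k"
    if "k \<le> n" for k
    unfolding t_def using qbinom_qpoch_term_Suc[OF Suc.prems assms(2) that] by simp
  have sum_Suc: "(\<Sum>k\<le>n. t n a b k) = t n a b 0 + (\<Sum>k\<le>n. t n a b (Suc k))"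
  proof -
    have "t n a b (Suc n) = 0"
      by (simp add: t_def qbinom_eq_0)
    then have "(\<Sum>k\<le>n. t n a b k) = (\<Sum>k\<le>Suc n. t n a b k)"
      by simp
    also have "\<dots> = t n a b 0 + (\<Sum>k\<le>n. t n a b (Suc k))"
      by (rule sum.atMost_Suc_shift)
    finally show ?thesis .
  qed
  have ih: "(\<Sum>k\<le>n. t n a b k) = qpoch (a * b) q n"
    using Suc.IH[OF hyp] by (simp add: t_def)
  have ih_shifted: "(\<Sum>k\<le>n. t n (a * q) (b / q) k) = qpoch (a * b) q n"
    using Suc.IH[OF hyp, of "a * q" "b / q"] assms(2) by (simp add: t_def)
  have "(\<Sum>k\<le>Suc n. t (Suc n) a b k) = t (Suc n) a b 0 + (\<Sum>k\<le>n. t (Suc n) a b (Suc k))"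
    by (rule sum.atMost_Suc_shift)
  also have "\<dots> = (1 - b * q ^ n) * t n a b 0
      + (\<Sum>k\<le>n. (1 - b * q ^ n) * t n a b (Suc k) + (1 - a) * (b * q ^ n) * t n (a * q) (b / q) k)"
    using head tail by simp
  also have "\<dots> = (1 - b * q ^ n) * (\<Sum>k\<le>n. t n a b k)
      + (1 - a) * (b * q ^ n) * (\<Sum>k\<le>n. t n (a * q) (b / q) k)"
    unfolding sum_Suc sum.distrib sum_distrib_left[symmetric] by (simp add: distrib_left)
  also have "\<dots> = qpoch (a * b) q (Suc n)"
    unfolding ih ih_shifted by (simp add: qpoch_Suc algebra_simps)
  finally show ?case
    by (simp add: t_def)
qed

definition qbinom_sum_term :: "complex \<Rightarrow> nat \<Rightarrow> complex \<Rightarrow> nat \<Rightarrow> nat \<Rightarrow> complex" where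
  "qbinom_sum_term q m z n k = qbinom q n k * qpoch (q ^ m / z) q k * qpoch z q (n - k)
     / (qpoch (z / q ^ m) q (m + n) * (1 - q ^ k) ^ m) * z ^ k"

definition qbinom_sum :: "complex \<Rightarrow> nat \<Rightarrow> complex \<Rightarrow> nat \<Rightarrow> complex" where
  "qbinom_sum q m z n = (\<Sum>k=1..n. qbinom_sum_term q m z n k)"

lemma qbinom_sum_0:
  assumes "\<forall>i\<in>{1..n}. 1 - q ^ i \<noteq> 0" and "q \<noteq> 0" and "z \<noteq> 0" and "n \<ge> 1"
    and "qpoch z q n \<noteq> 0"
  shows "qbinom_sum q 0 z n = -1"
proof -
  have "0 = qpoch (1 / z * z) q n"
    using assms(3,4) qpoch_1_Suc[of q "n - 1"] by simp
  also have "\<dots> = (\<Sum>k\<le>n. qbinom q n k * qpoch (1 / z) q k * qpoch z q (n - k) * z ^ k)"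
    by (rule qpoch_mult_eq_qbinom_sum[OF assms(1,2)])
  also have "\<dots> = qpoch z q n + (\<Sum>k=1..n. qbinom q n k * qpoch (1 / z) q k * qpoch z q (n - k) * z ^ k)"
    using qpoch_q_nonzero[OF assms(1) order_refl]
    by (simp add: atMost_atLeast0 sum.atLeast_Suc_atMost qbinom_0_right)
  also have "\<dots> = qpoch z q n * (1 + qbinom_sum q 0 z n)"
    using assms(5) by (simp add: qbinom_sum_def qbinom_sum_term_def sum_distrib_left algebra_simps)
  finally show ?thesis
    using assms(5) by (simp add: eq_neg_iff_add_eq_0 add.commute)
qed

lemma qbinom_sum_term_diff:
  assumes "\<forall>i\<in>{1..Suc n}. 1 - q ^ i \<noteq> 0" and "q \<noteq> 0"
    and "qpoch (z / q ^ Suc m) q (Suc m + Suc n) \<noteq> 0" and "k \<le> n"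
  shows "qbinom_sum_term q (Suc m) z (Suc n) (Suc k) - qbinom_sum_term q (Suc m) z n (Suc k)
    = q ^ Suc n / ((1 - z * q ^ n) * (1 - q ^ Suc n)) * qbinom_sum_term q m (z / q) (Suc n) (Suc k)"
proof -
  define D P u v w where "D = qpoch (z / q ^ Suc m) q (Suc m + n)"
    and "P = qpoch (q ^ Suc m / z) q (Suc k)" and "u = 1 - q ^ Suc k" and "v = 1 - q ^ Suc n"
    and "w = 1 - z * q ^ n"
  have D_Suc: "qpoch (z / q ^ Suc m) q (Suc m + Suc n) = D * w"
    using assms(2) by (simp add: D_def w_def qpoch_Suc power_add)
  have nz: "D \<noteq> 0" "w \<noteq> 0" "u \<noteq> 0" "v \<noteq> 0"
    using assms(1,3,4) D_Suc unfolding u_def v_def by (auto simp del: power_Suc)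
  have step: "qbinom q (Suc n) (Suc k) * qpoch z q (n - k)
      - qbinom q n (Suc k) * qpoch z q (n - Suc k) * w
      = q ^ (n - k) * qbinom q n k * qpoch (z / q) q (n - k)"
    unfolding w_def by (rule qbinom_qpoch_pascal[OF assms(1,2,4)])
  have ratio: "qbinom q n k = qbinom q (Suc n) (Suc k) * u / v"
    using qbinom_Suc_Suc_ratio[OF assms(1), of k] nz unfolding u_def v_def by (simp add: field_simps)
  have pw: "q ^ (n - k) * z ^ Suc k = q ^ Suc n * (z / q) ^ Suc k"
    using assms(2,4) by (simp add: power_divide field_simps flip: power_add)
  have "qbinom_sum_term q (Suc m) z (Suc n) (Suc k) - qbinom_sum_term q (Suc m) z n (Suc k)
      = P * z ^ Suc k / (D * w * u ^ Suc m)
        * (qbinom q (Suc n) (Suc k) * qpoch z q (n - k) - qbinom q n (Suc k) * qpoch z q (n - Suc k) * w)"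
    unfolding qbinom_sum_term_def D_Suc D_def[symmetric] P_def[symmetric] u_def[symmetric]
    using nz by (simp add: field_simps)
  also have "\<dots> = P * (q ^ (n - k) * z ^ Suc k) * qbinom q n k * qpoch (z / q) q (n - k) / (D * w * u ^ Suc m)"
    unfolding step by (simp add: field_simps)
  also have "\<dots> = q ^ Suc n / (w * v)
        * (qbinom q (Suc n) (Suc k) * P * qpoch (z / q) q (n - k) / (D * u ^ m) * (z / q) ^ Suc k)"
    unfolding pw ratio using nz by (simp add: field_simps)
  also have "\<dots> = q ^ Suc n / ((1 - z * q ^ n) * (1 - q ^ Suc n)) * qbinom_sum_term q m (z / q) (Suc n) (Suc k)"
  proof -
    have shift: "q ^ m / (z / q) = q ^ Suc m / z" "z / q / q ^ m = z / q ^ Suc m" "m + Suc n = Suc m + n"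
      using assms(2) by simp_all
    show ?thesis
      unfolding qbinom_sum_term_def shift D_def[symmetric] P_def[symmetric] u_def[symmetric]
        v_def[symmetric] w_def[symmetric] by simp
  qed
  finally show ?thesis .
qed

lemma qbinom_sum_Suc:
  assumes "\<forall>i\<in>{1..Suc n}. 1 - q ^ i \<noteq> 0" and "q \<noteq> 0"
    and "qpoch (z / q ^ Suc m) q (Suc m + Suc n) \<noteq> 0"
  shows "qbinom_sum q (Suc m) z (Suc n) = qbinom_sum q (Suc m) z n
    + q ^ Suc n / ((1 - z * q ^ n) * (1 - q ^ Suc n)) * qbinom_sum q m (z / q) (Suc n)"
proof -
  have "qbinom_sum q (Suc m) z n = (\<Sum>k=1..Suc n. qbinom_sum_term q (Suc m) z n k)"
    by (simp add: qbinom_sum_def qbinom_sum_term_def qbinom_eq_0)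
  then have "qbinom_sum q (Suc m) z (Suc n) - qbinom_sum q (Suc m) z n
      = (\<Sum>k=1..Suc n. qbinom_sum_term q (Suc m) z (Suc n) k - qbinom_sum_term q (Suc m) z n k)"
    by (simp add: qbinom_sum_def sum_subtractf)
  also have "\<dots> = (\<Sum>k=1..Suc n. q ^ Suc n / ((1 - z * q ^ n) * (1 - q ^ Suc n))
      * qbinom_sum_term q m (z / q) (Suc n) k)"
  proof (rule sum.cong)
    fix k
    assume "k \<in> {1..Suc n}"
    then obtain j where "k = Suc j" and "j \<le> n"
      by (cases k) auto
    then show "qbinom_sum_term q (Suc m) z (Suc n) k - qbinom_sum_term q (Suc m) z n k
      = q ^ Suc n / ((1 - z * q ^ n) * (1 - q ^ Suc n)) * qbinom_sum_term q m (z / q) (Suc n) k"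
      using qbinom_sum_term_diff[OF assms] by simp
  qed simp
  also have "\<dots> = q ^ Suc n / ((1 - z * q ^ n) * (1 - q ^ Suc n)) * qbinom_sum q m (z / q) (Suc n)"
    unfolding qbinom_sum_def by (rule sum_distrib_left[symmetric])
  finally show ?thesis
    by (simp add: diff_eq_eq add.commute)
qed

definition tuple_weight :: "complex \<Rightarrow> complex \<Rightarrow> nat \<Rightarrow> nat \<Rightarrow> complex" where
  "tuple_weight q z i k = q ^ k / ((1 - z * q powi (int k - int i)) * (1 - q ^ k))"

lemma tuple_weight_1_Suc:
  "tuple_weight q z 1 (Suc n) = q ^ Suc n / ((1 - z * q ^ n) * (1 - q ^ Suc n))"
  by (simp add: tuple_weight_def)

fun nested_sum :: "complex \<Rightarrow> nat \<Rightarrow> complex \<Rightarrow> nat \<Rightarrow> complex" where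
  "nested_sum q 0 z n = 1"
| "nested_sum q (Suc m) z n = (\<Sum>k=1..n. tuple_weight q z 1 k * nested_sum q m (z / q) k)"

lemma nested_sum_Suc_Suc:
  "nested_sum q (Suc m) z (Suc n)
    = nested_sum q (Suc m) z n + tuple_weight q z 1 (Suc n) * nested_sum q m (z / q) (Suc n)"
  by simp

lemma qbinom_sum_eq_neg_nested_sum:
  assumes "\<forall>i\<in>{1..n}. 1 - q ^ i \<noteq> 0" and "q \<noteq> 0" and "z \<noteq> 0"
    and "qpoch (z / q ^ m) q (m + n) \<noteq> 0" and "n \<ge> 1"
  shows "qbinom_sum q m z n = - nested_sum q m z n"
  using assms(1,3-5)
proof (induction m arbitrary: z n)
  case 0
  then show ?case
    using qbinom_sum_0[OF _ assms(2)] by simp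
next
  case (Suc m)
  note outer_IH = Suc.IH and z_nonzero = Suc.prems(2)
  from Suc.prems(1,3) show ?case
  proof (induction n)
    case 0
    show ?case
      by (simp add: qbinom_sum_def)
  next
    case (Suc n)
    have shifted: "qbinom_sum q m (z / q) (Suc n) = - nested_sum q m (z / q) (Suc n)"
    proof (rule outer_IH)
      show "qpoch (z / q / q ^ m) q (m + Suc n) \<noteq> 0"
        using qpoch_nonzero_prefix[OF Suc.prems(2)] by (simp add: mult.assoc)
    qed (use Suc.prems(1) z_nonzero assms(2) in auto)
    have unshifted: "qbinom_sum q (Suc m) z n = - nested_sum q (Suc m) z n"
      using Suc.IH Suc.prems qpoch_nonzero_prefix[OF Suc.prems(2)] by auto
    show ?case
      unfolding qbinom_sum_Suc[OF Suc.prems(1) assms(2) Suc.prems(2)] nested_sum_Suc_Suc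
        tuple_weight_1_Suc unshifted shifted
      by simp
  qed
qed

definition decreasing_tuples :: "nat \<Rightarrow> nat \<Rightarrow> (nat \<Rightarrow> nat) set" where
  "decreasing_tuples m n = {kk \<in> {1..m} \<rightarrow>\<^sub>E {1..n}. \<forall>i. 1 \<le> i \<and> i < m \<longrightarrow> kk (i + 1) \<le> kk i}"

lemma finite_decreasing_tuples: "finite (decreasing_tuples m n)"
  unfolding decreasing_tuples_def
  by (rule finite_subset[of _ "{1..m} \<rightarrow>\<^sub>E {1..n}"]) (auto intro: finite_PiE)

lemma decreasing_tuples_0: "decreasing_tuples 0 n = {\<lambda>_. undefined}"
  unfolding decreasing_tuples_def by auto

lemma decreasing_tuples_antimono:
  assumes "kk \<in> decreasing_tuples m n" and "1 \<le> i" and "i \<le> j" and "j \<le> m"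
  shows "kk j \<le> kk i"
  using assms(3,4)
proof (induction j)
  case (Suc j)
  show ?case
  proof (cases "i = Suc j")
    case False
    then have "kk (Suc j) \<le> kk j"
      using assms(1,2) Suc.prems unfolding decreasing_tuples_def by auto
    with False Suc show ?thesis
      by simp
  qed simp
qed simp

definition tuple_cons :: "nat \<Rightarrow> nat \<Rightarrow> (nat \<Rightarrow> nat) \<Rightarrow> nat \<Rightarrow> nat" where
  "tuple_cons m k h = restrict (\<lambda>i. if i = 1 then k else h (i - 1)) {1..Suc m}"

definition tuple_tail :: "nat \<Rightarrow> (nat \<Rightarrow> nat) \<Rightarrow> nat \<Rightarrow> nat" where
  "tuple_tail m kk = restrict (\<lambda>i. kk (Suc i)) {1..m}"

lemma tuple_cons_1 [simp]: "tuple_cons m k h 1 = k"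
  by (simp add: tuple_cons_def)

lemma tuple_cons_Suc [simp]: "1 \<le> i \<Longrightarrow> i \<le> m \<Longrightarrow> tuple_cons m k h (Suc i) = h i"
  by (simp add: tuple_cons_def)

lemma tuple_cons_tail:
  assumes "kk \<in> {1..Suc m} \<rightarrow>\<^sub>E A"
  shows "tuple_cons m (kk 1) (tuple_tail m kk) = kk"
proof
  fix i
  show "tuple_cons m (kk 1) (tuple_tail m kk) i = kk i"
    using PiE_arb[OF assms, of i] by (cases i) (auto simp: tuple_cons_def tuple_tail_def)
qed

lemma tuple_tail_cons:
  assumes "h \<in> {1..m} \<rightarrow>\<^sub>E A"
  shows "tuple_tail m (tuple_cons m k h) = h"
proof
  fix i
  show "tuple_tail m (tuple_cons m k h) i = h i"
    using PiE_arb[OF assms, of i] by (simp add: tuple_tail_def tuple_cons_def)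
qed

lemma tuple_tail_mem:
  assumes "kk \<in> decreasing_tuples (Suc m) n"
  shows "tuple_tail m kk \<in> decreasing_tuples m (kk 1)"
proof -
  have "kk (Suc i) \<in> {1..kk 1}" if "i \<in> {1..m}" for i
    using that assms decreasing_tuples_antimono[OF assms, of 1 "Suc i"]
    unfolding decreasing_tuples_def by (auto dest: PiE_mem)
  moreover have "kk (Suc (i + 1)) \<le> kk (Suc i)" if "1 \<le> i" "i < m" for i
    using that assms unfolding decreasing_tuples_def by auto
  ultimately show ?thesis
    by (auto simp: tuple_tail_def decreasing_tuples_def)
qed

lemma tuple_cons_mem:
  assumes k: "k \<in> {1..n}" and h: "h \<in> decreasing_tuples m k"
  shows "tuple_cons m k h \<in> decreasing_tuples (Suc m) n"
proof -
  have h_PiE: "h \<in> {1..m} \<rightarrow>\<^sub>E {1..k}"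
    using h unfolding decreasing_tuples_def by blast
  have "tuple_cons m k h \<in> {1..Suc m} \<rightarrow>\<^sub>E {1..n}"
    unfolding tuple_cons_def restrict_PiE_iff
  proof
    fix i
    assume i: "i \<in> {1..Suc m}"
    show "(if i = 1 then k else h (i - 1)) \<in> {1..n}"
    proof (cases "i = 1")
      case False
      with i have "i - 1 \<in> {1..m}"
        by auto
      with False show ?thesis
        using PiE_mem[OF h_PiE] k by fastforce
    qed (use k in simp)
  qed
  moreover have "tuple_cons m k h (i + 1) \<le> tuple_cons m k h i" if i: "1 \<le> i" "i < Suc m" for i
  proof (cases "i = 1")
    case True
    then show ?thesis
      using PiE_mem[OF h_PiE, of 1] i by (simp add: tuple_cons_def)
  next
    case False
    then obtain j where j: "i = Suc j" "1 \<le> j" "j < m"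
      using i by (cases i) auto
    then have "h (j + 1) \<le> h j"
      using h unfolding decreasing_tuples_def by blast
    then show ?thesis
      using j by simp
  qed
  ultimately show ?thesis
    unfolding decreasing_tuples_def by simp
qed

lemma sum_decreasing_tuples_Suc:
  "(\<Sum>kk\<in>decreasing_tuples (Suc m) n. g kk)
    = (\<Sum>k=1..n. \<Sum>h\<in>decreasing_tuples m k. g (tuple_cons m k h))"
proof -
  have "(\<Sum>kk\<in>decreasing_tuples (Suc m) n. g kk)
      = (\<Sum>(k, h)\<in>(SIGMA k:{1..n}. decreasing_tuples m k). g (tuple_cons m k h))"
  proof (rule sum.reindex_bij_witness[of _ "\<lambda>(k, h). tuple_cons m k h" "\<lambda>kk. (kk 1, tuple_tail m kk)"])
    fix kk
    assume kk: "kk \<in> decreasing_tuples (Suc m) n"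
    then have kk_PiE: "kk \<in> {1..Suc m} \<rightarrow>\<^sub>E {1..n}"
      unfolding decreasing_tuples_def by blast
    then have "tuple_cons m (kk 1) (tuple_tail m kk) = kk"
      by (rule tuple_cons_tail)
    then show "(case (kk 1, tuple_tail m kk) of (k, h) \<Rightarrow> tuple_cons m k h) = kk"
      and "(case (kk 1, tuple_tail m kk) of (k, h) \<Rightarrow> g (tuple_cons m k h)) = g kk"
      by simp_all
    show "(kk 1, tuple_tail m kk) \<in> (SIGMA k:{1..n}. decreasing_tuples m k)"
      using kk_PiE tuple_tail_mem[OF kk] by auto
  next
    fix b
    assume "b \<in> (SIGMA k:{1..n}. decreasing_tuples m k)"
    then obtain k h where b: "b = (k, h)" and k: "k \<in> {1..n}" and h: "h \<in> decreasing_tuples m k"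
      by blast
    show "(case b of (k, h) \<Rightarrow> tuple_cons m k h) \<in> decreasing_tuples (Suc m) n"
      using tuple_cons_mem[OF k h] b by simp
    have "h \<in> {1..m} \<rightarrow>\<^sub>E {1..k}"
      using h unfolding decreasing_tuples_def by blast
    then have "tuple_tail m (tuple_cons m k h) = h"
      by (rule tuple_tail_cons)
    with tuple_cons_1 show "((case b of (k, h) \<Rightarrow> tuple_cons m k h) 1,
        tuple_tail m (case b of (k, h) \<Rightarrow> tuple_cons m k h)) = b"
      by (simp only: b prod.case)
  qed
  then show ?thesis
    by (simp add: sum.Sigma finite_decreasing_tuples)
qed

lemma tuple_weight_Suc:
  assumes "q \<noteq> 0"
  shows "tuple_weight q z (Suc i) k = tuple_weight q (z / q) i k"
proof -
  have e: "int k - int (Suc i) = (int k - int i) - 1"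
    by simp
  have "q powi (int k - int (Suc i)) = q powi (int k - int i) / q"
    unfolding e by (subst power_int_diff) (use assms in simp_all)
  then show ?thesis
    by (simp add: tuple_weight_def)
qed

lemma sum_decreasing_tuples_eq_nested_sum:
  assumes "q \<noteq> 0"
  shows "(\<Sum>kk\<in>decreasing_tuples m n. \<Prod>i=1..m. tuple_weight q z i (kk i)) = nested_sum q m z n"
proof (induction m arbitrary: z n)
  case 0
  show ?case
    by (simp add: decreasing_tuples_0)
next
  case (Suc m)
  have factor: "(\<Prod>i=1..Suc m. tuple_weight q z i (tuple_cons m k h i))
      = tuple_weight q z 1 k * (\<Prod>i=1..m. tuple_weight q (z / q) i (h i))" for k h
  proof -
    have "(\<Prod>i=1..Suc m. tuple_weight q z i (tuple_cons m k h i))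
        = tuple_weight q z 1 (tuple_cons m k h 1) * (\<Prod>i=Suc 1..Suc m. tuple_weight q z i (tuple_cons m k h i))"
      by (rule prod.atLeast_Suc_atMost) simp
    also have "(\<Prod>i=Suc 1..Suc m. tuple_weight q z i (tuple_cons m k h i))
        = (\<Prod>i=1..m. tuple_weight q z (Suc i) (tuple_cons m k h (Suc i)))"
      by (rule prod.shift_bounds_cl_Suc_ivl)
    also have "\<dots> = (\<Prod>i=1..m. tuple_weight q (z / q) i (h i))"
      by (rule prod.cong) (simp_all add: tuple_weight_Suc[OF assms])
    finally show ?thesis
      by (simp only: tuple_cons_1)
  qed
  have "(\<Sum>kk\<in>decreasing_tuples (Suc m) n. \<Prod>i=1..Suc m. tuple_weight q z i (kk i))
      = (\<Sum>k=1..n. \<Sum>h\<in>decreasing_tuples m k. \<Prod>i=1..Suc m. tuple_weight q z i (tuple_cons m k h i))"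
    by (rule sum_decreasing_tuples_Suc)
  also have "\<dots> = (\<Sum>k=1..n. tuple_weight q z 1 k * (\<Sum>h\<in>decreasing_tuples m k. \<Prod>i=1..m. tuple_weight q (z / q) i (h i)))"
    by (simp only: factor sum_distrib_left)
  also have "\<dots> = nested_sum q (Suc m) z n"
    by (simp only: Suc.IH nested_sum.simps)
  finally show ?case .
qed

theorem theorem1p2:
  fixes q z :: complex and m n :: nat
  assumes "m \<ge> 1" and "n \<ge> 1"
    and "q \<noteq> 0" and "z \<noteq> 0"
    and "\<forall>k\<in>{1..n}. 1 - q ^ k \<noteq> 0"
    and "qpoch (z / q ^ m) q (m + n) \<noteq> 0"
    and "\<forall>i\<in>{1..m}. \<forall>j\<in>{1..n}. 1 - z * q powi (int j - int i) \<noteq> 0"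
  shows "(\<Sum>k=1..n. qbinom q n k * qpoch (q ^ m / z) q k * qpoch z q (n - k)
            / (qpoch (z / q ^ m) q (m + n) * (1 - q ^ k) ^ m) * z ^ k)
       = - (\<Sum>kk\<in>{kk \<in> {1..m} \<rightarrow>\<^sub>E {1..n}. \<forall>i. 1 \<le> i \<and> i < m \<longrightarrow> kk (i + 1) \<le> kk i}.
              \<Prod>i=1..m. q ^ kk i / ((1 - z * q powi (int (kk i) - int i)) * (1 - q ^ kk i)))"
proof -
  have "qbinom_sum q m z n = - nested_sum q m z n"
    using qbinom_sum_eq_neg_nested_sum[OF assms(5,3,4,6,2)] .
  also have "nested_sum q m z n = (\<Sum>kk\<in>decreasing_tuples m n. \<Prod>i=1..m. tuple_weight q z i (kk i))"
    using sum_decreasing_tuples_eq_nested_sum[OF assms(3)] by simp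
  finally show ?thesis
    unfolding qbinom_sum_def qbinom_sum_term_def decreasing_tuples_def tuple_weight_def .
qed

end
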